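(* Let $m,p\ge1$, let $a_1,\dots,a_{2m}$ and $b_1,\dots,b_{2p}$ be positive integers, and let $$r=[2a_1,2a_2,\dots,2a_{2m},2b_1,-2b_2,2b_3,-2b_4,\dots,-2b_{2p}]$$ or $r=[2b_1,-2b_2,2b_3,\dots,-2b_{2p},2a_1,2a_2,\dots,2a_{2m}]$. Then every zero of $\Delta_{K(r)}(t)$ is real or has modulus $1$; counted with multiplicity, exactly $2p$ zeros are real and exactly $2m$ zeros are non-real of modulus $1$.
   Context: For a finite sequence $r=[2a_1,2a_2,\dots,2a_n]$ of nonzero even integers, $K(r)$ denotes the 2-bridge knot or link whose associated rational number has the even continued fraction expansion $1/(2a_1-1/(2a_2-\cdots-1/(2a_n)))$. Let $M(r)$ be the $n\times n$ integer matrix whose $(k,k)$-entry is $a_k$, whose $(k,k+1)$-entry is $1$ ($1\le k\le n-1$), and whose other entries are $0$; $\Delta_{K(r)}(t)=\det(tM(r)-M(r)^T)$ is the (reduced) Alexander polynomial of $K(r)$ (up to sign). *)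

theory Defs
  imports "Jordan_Normal_Form.Determinant" "HOL-Computational_Algebra.Polynomial" Complex_Main
begin

text \<open>An even continued fraction sequence r = [2a_1,...,2a_n] is represented as the
  integer list of its (even) entries. M(r) has diagonal entries a_k = r_k / 2 and
  1 on the superdiagonal (0-indexed).\<close>

definition seifert_M :: "int list \<Rightarrow> int mat" where
  "seifert_M r = mat (length r) (length r)
     (\<lambda>(i, j). if i = j then (r ! i) div 2 else if j = i + 1 then 1 else 0)"

definition alexander_poly :: "int list \<Rightarrow> int poly" where
  "alexander_poly r = det (mat (length r) (length r)
     (\<lambda>(i, j). [:0, seifert_M r $$ (i, j):] - [:seifert_M r $$ (j, i):]))"

end

theory Submission
  imports Defs "Jordan_Normal_Form.Char_Poly"
begin

text \<open>
  The matrix t M - M^T is tridiagonal with diagonal entries a_k (t - 1). Pairing consecutive rows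
  and substituting y = (t - 1)^2 / t gives Delta(t) = t^N F_N(y), where (F_j, G_j) runs through
  the recursion (F, G) |-> (F + beta_j y (G + alpha_j F), G + alpha_j F) with alpha_j, beta_j the
  Seifert entries a_(2j+1), a_(2j+2). A real root y of F_N yields the two roots of
  t^2 - (y + 2) t + 1, which are real for y > 0 and conjugate points of the unit circle for
  -4 < y < 0. On a block with alpha >= 1 and beta <= -1 the polynomials F and G have interlacing
  positive roots below 4, like orthogonal polynomials; the substitution y |-> -y turns the a-part
  into such a block. Evaluated at the roots of one block, F_N only picks up a factor of known sign
  from the other block, which exhibits p sign changes of F_N on (0, 4) and m on (-4, 0). Since
  deg Delta <= 2 (m + p), the resulting 2p real and 2m unimodular zeros are all the zeros.
\<close>

section \<open>Continuant pairs\<close>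

definition cont_step :: "'a::comm_ring_1 \<Rightarrow> 'a \<Rightarrow> 'a \<Rightarrow> 'a \<times> 'a \<Rightarrow> 'a \<times> 'a" where
  "cont_step a b y s = (fst s + b * y * (snd s + a * fst s), snd s + a * fst s)"

primrec cont_pair :: "(nat \<Rightarrow> 'a::comm_ring_1) \<Rightarrow> (nat \<Rightarrow> 'a) \<Rightarrow> 'a \<Rightarrow> 'a \<times> 'a \<Rightarrow> nat \<Rightarrow> 'a \<times> 'a" where
  "cont_pair al be y s 0 = s"
| "cont_pair al be y s (Suc k) = cont_step (al k) (be k) y (cont_pair al be y s k)"

lemma cont_pair_add:
  "cont_pair al be y s (k + l)
     = cont_pair (\<lambda>j. al (k + j)) (\<lambda>j. be (k + j)) y (cont_pair al be y s k) l"
  by (induction l) auto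

lemma cont_pair_linear:
  "cont_pair al be y (F, G) k =
    (F * fst (cont_pair al be y (1, 0) k) + G * fst (cont_pair al be y (0, 1) k),
     F * snd (cont_pair al be y (1, 0) k) + G * snd (cont_pair al be y (0, 1) k))"
  by (induction k) (auto simp: cont_step_def algebra_simps)

lemma cont_pair_det:
  "fst (cont_pair al be y (1, 0) k) * snd (cont_pair al be y (0, 1) k)
     - snd (cont_pair al be y (1, 0) k) * fst (cont_pair al be y (0, 1) k) = 1"
  by (induction k) (simp_all add: cont_step_def algebra_simps)

lemma cont_pair_append:
  fixes al be :: "nat \<Rightarrow> 'a::comm_ring_1" and y :: 'a and k :: nat
  defines "X \<equiv> cont_pair al be y (1, 0) k"
  shows "fst (cont_pair al be y (1, 0) (k + l)) =
    fst X * fst (cont_pair (\<lambda>j. al (k + j)) (\<lambda>j. be (k + j)) y (1, 0) l)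
    + snd X * fst (cont_pair (\<lambda>j. al (k + j)) (\<lambda>j. be (k + j)) y (0, 1) l)"
  unfolding cont_pair_add X_def by (subst prod.collapse[symmetric], subst cont_pair_linear) simp

lemma cont_pair_uminus: "cont_pair al be (- y) s k = cont_pair al (\<lambda>j. - be j) y s k"
  by (induction k) (auto simp: cont_step_def)

lemma fst_cont_pair_at_0: "fst (cont_pair al be 0 (1, 0) k) = 1"
  by (induction k) (auto simp: cont_step_def)

lemma (in comm_ring_hom) cont_pair_hom:
  "cont_pair (\<lambda>j. hom (al j)) (\<lambda>j. hom (be j)) (hom y) (hom F, hom G) k
     = map_prod hom hom (cont_pair al be y (F, G) k)"
  by (induction k) (auto simp: cont_step_def hom_distribs)

definition cont_poly :: "(nat \<Rightarrow> 'a::comm_ring_1) \<Rightarrow> (nat \<Rightarrow> 'a) \<Rightarrow> nat \<Rightarrow> 'a poly \<times> 'a poly" where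
  "cont_poly al be k = cont_pair (\<lambda>j. [:al j:]) (\<lambda>j. [:be j:]) [:0, 1:] (1, 0) k"

lemma poly_cont_poly:
  "poly (fst (cont_poly al be k)) y = fst (cont_pair al be y (1, 0) k)"
  "poly (snd (cont_poly al be k)) y = snd (cont_pair al be y (1, 0) k)"
  using poly_hom.cont_pair_hom[where a = y and al = "\<lambda>j. [:al j:]" and be = "\<lambda>j. [:be j:]"
      and y = "[:0, 1:]" and F = 1 and G = 0]
  by (simp_all add: cont_poly_def prod_eq_iff)

lemma cont_poly_Suc:
  "cont_poly al be (Suc k) =
    (let f = fst (cont_poly al be k); g = snd (cont_poly al be k) + smult (al k) f
     in (f + smult (be k) (pCons 0 g), g))"
  by (simp add: cont_poly_def cont_step_def Let_def)

lemma degree_cont_poly: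
  "degree (fst (cont_poly al be k)) \<le> k \<and> degree (snd (cont_poly al be k)) \<le> k - 1"
proof (induction k)
  case (Suc k)
  then have "degree (snd (cont_poly al be k) + smult (al k) (fst (cont_poly al be k))) \<le> k"
    by (intro degree_add_le order.trans[OF degree_smult_le]) auto
  with Suc show ?case
    by (auto simp: cont_poly_Suc Let_def intro!: degree_add_le order.trans[OF degree_smult_le])
qed (simp add: cont_poly_def)

lemma finite_cont_pair_roots:
  fixes al be :: "nat \<Rightarrow> 'a::idom"
  shows "finite {y. fst (cont_pair al be y (1, 0) k) = 0}"
proof -
  have "poly (fst (cont_poly al be k)) 0 = 1"
    by (simp add: poly_cont_poly fst_cont_pair_at_0)
  then have "fst (cont_poly al be k) \<noteq> 0" by auto
  from poly_roots_finite[OF this] show ?thesis by (simp add: poly_cont_poly)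
qed

lemma cont_step_pos:
  fixes a b y F G :: real
  assumes "0 < a" "0 < b * y" "0 \<le> F" "0 \<le> G" "0 < F + G"
  shows "0 < fst (cont_step a b y (F, G)) \<and> 0 < snd (cont_step a b y (F, G))"
proof -
  have "0 < G + a * F"
    using assms by (cases "F = 0") (auto intro: add_nonneg_pos)
  with assms show ?thesis
    by (simp add: cont_step_def add_nonneg_pos mult.assoc[symmetric])
qed

lemma cont_pair_pos:
  fixes al be :: "nat \<Rightarrow> real"
  assumes "\<forall>j<k. 0 < al j \<and> 0 < be j * y" "0 \<le> F" "0 \<le> G" "0 < F + G" "0 < k"
  shows "0 < fst (cont_pair al be y (F, G) k) \<and> 0 < snd (cont_pair al be y (F, G) k)"
  using assms
proof (induction k)
  case (Suc k)
  show ?case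
  proof (cases "k = 0")
    case True
    with Suc.prems show ?thesis by (simp add: cont_step_pos)
  next
    case False
    define X where "X = cont_pair al be y (F, G) k"
    from Suc False have "0 < fst X \<and> 0 < snd X"
      by (simp add: X_def)
    with Suc.prems show ?thesis
      using cont_step_pos[of "al k" "be k" y "fst X" "snd X"] by (simp add: X_def)
  qed
qed simp

lemma cont_pair_alternating_sign:
  fixes al be :: "nat \<Rightarrow> real"
  assumes "\<forall>j<k. 1 \<le> al j \<and> be j * y \<le> -4"
  defines "X \<equiv> cont_pair al be y (1, 0) k"
  shows "0 < (-1) ^ k * fst X \<and> 0 \<le> (-1) ^ k * fst X + 2 * ((-1) ^ k * snd X)"
  unfolding X_def using assms(1)
proof (induction k)
  case (Suc k)
  define phi where "phi = (-1) ^ k * fst (cont_pair al be y (1, 0) k)"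
  define psi where "psi = - ((-1) ^ k * snd (cont_pair al be y (1, 0) k))"
  have IH: "0 < phi" "2 * psi \<le> phi"
    using Suc by (auto simp: phi_def psi_def)
  have ab: "1 \<le> al k" "4 \<le> - (be k * y)"
    using Suc.prems by auto
  define psi' where "psi' = al k * phi - psi"
  have "phi \<le> al k * phi"
    using ab IH by simp
  with IH(2) have psi': "phi \<le> 2 * psi'"
    unfolding psi'_def by (simp add: algebra_simps)
  have "4 * psi' \<le> - (be k * y) * psi'"
    using ab psi' IH by (intro mult_right_mono) auto
  moreover have "(-1) ^ Suc k * fst (cont_pair al be y (1, 0) (Suc k)) = - (be k * y) * psi' - phi"
    "(-1) ^ Suc k * snd (cont_pair al be y (1, 0) (Suc k)) = - psi'"
    by (simp_all add: cont_step_def phi_def psi_def psi'_def algebra_simps)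
  ultimately show ?case
    using psi' IH by simp
qed simp

lemma cont_pair_cone:
  fixes al be :: "nat \<Rightarrow> real"
  assumes "\<forall>j<k. 1 \<le> al j \<and> 0 \<le> be j * y" "0 < s * F" "0 \<le> s * F + 2 * (s * G)"
  defines "X \<equiv> cont_pair al be y (F, G) k"
  shows "0 < s * fst X \<and> 0 \<le> s * fst X + 2 * (s * snd X)"
  unfolding X_def using assms(1)
proof (induction k)
  case (Suc k)
  define phi where "phi = s * fst (cont_pair al be y (F, G) k)"
  define psi where "psi = s * snd (cont_pair al be y (F, G) k)"
  have IH: "0 < phi" "0 \<le> phi + 2 * psi"
    using Suc by (auto simp: phi_def psi_def)
  have ab: "1 \<le> al k" "0 \<le> be k * y"
    using Suc.prems by auto
  define psi' where "psi' = psi + al k * phi"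
  have "phi \<le> al k * phi"
    using ab IH by simp
  then have "0 < psi'"
    using IH unfolding psi'_def by linarith
  moreover have "s * fst (cont_pair al be y (F, G) (Suc k)) = phi + (be k * y) * psi'"
    "s * snd (cont_pair al be y (F, G) (Suc k)) = psi'"
    by (simp_all add: cont_step_def phi_def psi_def psi'_def algebra_simps)
  ultimately show ?case
    using ab IH by (simp add: add_pos_nonneg)
qed (use assms in simp)

section \<open>Sign changes and real roots of polynomials\<close>

lemma strict_mono_on_lessThanI:
  fixes f :: "nat \<Rightarrow> 'a::order"
  assumes "\<And>i. Suc i < n \<Longrightarrow> f i < f (Suc i)"
  shows "strict_mono_on {..<n} f"
proof (rule strict_mono_onI)
  fix i j assume "i \<in> {..<n}" "j \<in> {..<n}" "i < j"
  moreover from this have "{i..<j} \<subseteq> {i. Suc i < n}"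
    by auto
  ultimately show "f i < f j"
    using lift_Suc_mono_less_ivl[of "{i. Suc i < n}" f i j] assms by blast
qed

lemma poly_sign_persists:
  fixes h :: "real poly"
  assumes "\<And>x. min a b \<le> x \<Longrightarrow> x \<le> max a b \<Longrightarrow> poly h x \<noteq> 0" "0 < s * poly h a"
  shows "0 < s * poly h b"
proof (rule ccontr)
  assume "\<not> 0 < s * poly h b"
  moreover have "poly h b \<noteq> 0"
    using assms(1)[of b] by simp
  ultimately have "poly h a * poly h b < 0"
    using assms(2) by (auto simp: zero_less_mult_iff mult_less_0_iff not_less)
  then have "poly h b * poly h a < 0" "a \<noteq> b"
    by (auto simp: mult.commute)
  then obtain x where "min a b < x" "x < max a b" "poly h x = 0"
    using poly_IVT[of a b h] poly_IVT[of b a h] \<open>poly h a * poly h b < 0\<close>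
    by (cases "a < b") (auto simp: min_def max_def)
  with assms(1) show False by simp
qed

lemma alternating_signs_product:
  fixes u v :: real
  assumes "0 < (-1) ^ i * u" "0 < (-1) ^ Suc i * v"
  shows "u * v < 0"
  using assms by (cases "even i") (auto simp: zero_less_mult_iff mult_less_0_iff)

lemma roots_between_samples:
  fixes h :: "real poly"
  assumes "strict_mono_on {..n} q" "\<forall>i\<le>n. 0 < (-1) ^ i * poly h (q i)"
  shows "\<exists>w. \<forall>i<n. q i < w i \<and> w i < q (Suc i) \<and> poly h (w i) = 0"
proof -
  have "\<forall>i\<in>{..<n}. \<exists>x. q i < x \<and> x < q (Suc i) \<and> poly h x = 0"
  proof
    fix i assume "i \<in> {..<n}"
    then have "q i < q (Suc i)"
      using strict_mono_onD[OF assms(1)] by simp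
    moreover have "poly h (q i) * poly h (q (Suc i)) < 0"
    proof (rule alternating_signs_product)
      have "i \<le> n" "Suc i \<le> n"
        using \<open>i \<in> {..<n}\<close> by simp_all
      then show "0 < (-1) ^ i * poly h (q i)" "0 < (-1) ^ Suc i * poly h (q (Suc i))"
        using assms(2) by blast+
    qed
    ultimately show "\<exists>x. q i < x \<and> x < q (Suc i) \<and> poly h x = 0"
      using poly_IVT by blast
  qed
  from bchoice[OF this] show ?thesis by auto
qed

lemma strict_mono_on_interlaced:
  fixes w :: "nat \<Rightarrow> real"
  assumes "\<forall>i<n. q i < w i \<and> w i < q (Suc i)"
  shows "strict_mono_on {..<n} w"
proof (rule strict_mono_on_lessThanI)
  fix i assume "Suc i < n"
  then show "w i < w (Suc i)"
    using assms by (meson Suc_lessD order.strict_trans)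
qed

lemma card_roots_of_samples:
  fixes h :: "real poly"
  assumes "strict_mono_on {..n} q" "\<forall>i\<le>n. 0 < (-1) ^ i * poly h (q i)"
  shows "n \<le> card {x \<in> {q 0<..<q n}. poly h x = 0}"
proof -
  obtain w where w: "\<forall>i<n. q i < w i \<and> w i < q (Suc i) \<and> poly h (w i) = 0"
    using roots_between_samples[OF assms] by blast
  have "h \<noteq> 0"
    using assms(2) by auto
  then have "finite {x \<in> {q 0<..<q n}. poly h x = 0}"
    by (rule finite_subset[OF _ poly_roots_finite, rotated]) auto
  moreover have "inj_on w {..<n}"
    using w by (intro strict_mono_on_imp_inj_on strict_mono_on_interlaced[of n q]) blast
  moreover have "w ` {..<n} \<subseteq> {x \<in> {q 0<..<q n}. poly h x = 0}"
  proof (rule image_subsetI)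
    fix i assume "i \<in> {..<n}"
    moreover have "q 0 \<le> q i" "q (Suc i) \<le> q n"
      using \<open>i \<in> {..<n}\<close> strict_mono_on_leD[OF assms(1)] by simp_all
    ultimately show "w i \<in> {x \<in> {q 0<..<q n}. poly h x = 0}"
      using w by fastforce
  qed
  ultimately show ?thesis
    using card_mono[of _ "w ` {..<n}"] card_image[of w "{..<n}"] by simp
qed

definition in_gap :: "(nat \<Rightarrow> real) \<Rightarrow> nat \<Rightarrow> nat \<Rightarrow> real \<Rightarrow> bool" where
  "in_gap z n c y \<longleftrightarrow> (c = 0 \<or> z (c - 1) < y) \<and> (c = n \<or> y < z c)"

text \<open>The roots of h are z 0 < ... < z (n - 1), and h has sign (-1)^c on the c-th gap between
  them (in_gap), the two outer gaps being unbounded.\<close>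
definition alternating_roots :: "real poly \<Rightarrow> nat \<Rightarrow> (nat \<Rightarrow> real) \<Rightarrow> bool" where
  "alternating_roots h n z \<longleftrightarrow> strict_mono_on {..<n} z \<and> (\<forall>i<n. poly h (z i) = 0)
     \<and> (\<forall>c\<le>n. \<forall>y. in_gap z n c y \<longrightarrow> 0 < (-1) ^ c * poly h y)"

lemma in_gap_not_in_image:
  assumes "strict_mono_on {..<n} z" "c \<le> n" "in_gap z n c a" "in_gap z n c b" "a \<le> x" "x \<le> b"
  shows "x \<notin> z ` {..<n}"
proof
  assume "x \<in> z ` {..<n}"
  then obtain i where i: "i < n" "x = z i" by auto
  show False
  proof (cases "i < c")
    case True
    then have "z i \<le> z (c - 1)" "z (c - 1) < a"
      using strict_mono_on_leD[OF assms(1), of i "c - 1"] assms(2,3) i by (auto simp: in_gap_def)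
    with i assms(5) show False by simp
  next
    case False
    then have "z c \<le> z i" "b < z c"
      using strict_mono_on_leD[OF assms(1), of c i] assms(4) i by (auto simp: in_gap_def)
    with i assms(6) show False by simp
  qed
qed

lemma alternating_roots_of_samples:
  fixes h :: "real poly"
  assumes "degree h \<le> n" "strict_mono_on {..n} q" "\<forall>i\<le>n. 0 < (-1) ^ i * poly h (q i)"
  shows "\<exists>w. alternating_roots h n w \<and> (\<forall>i<n. q i < w i \<and> w i < q (Suc i))"
proof -
  obtain w where w: "\<forall>i<n. q i < w i \<and> w i < q (Suc i) \<and> poly h (w i) = 0"
    using roots_between_samples[OF assms(2,3)] by blast
  have mono: "strict_mono_on {..<n} w"
    using w by (intro strict_mono_on_interlaced[of n q]) blast
  have "h \<noteq> 0"
    using assms(3) by auto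
  have roots: "{x. poly h x = 0} = w ` {..<n}"
  proof (rule card_subset_eq[symmetric])
    show "finite {x. poly h x = 0}"
      by (rule poly_roots_finite[OF \<open>h \<noteq> 0\<close>])
    show "w ` {..<n} \<subseteq> {x. poly h x = 0}"
      using w by auto
    have "card {x. poly h x = 0} \<le> n"
      using card_poly_roots_bound[OF \<open>h \<noteq> 0\<close>] assms(1) by linarith
    then show "card (w ` {..<n}) = card {x. poly h x = 0}"
      using card_image[OF strict_mono_on_imp_inj_on[OF mono]]
        card_mono[OF \<open>finite {x. poly h x = 0}\<close> \<open>w ` {..<n} \<subseteq> _\<close>] by simp
  qed
  have "0 < (-1) ^ c * poly h y" if "c \<le> n" "in_gap w n c y" for c y
  proof (rule poly_sign_persists[of "q c"])
    have "in_gap w n c (q c)"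
      using w that(1) by (cases c) (auto simp: in_gap_def le_less)
    then show "poly h x \<noteq> 0" if "min (q c) y \<le> x" "x \<le> max (q c) y" for x
      using in_gap_not_in_image[OF mono \<open>c \<le> n\<close>, of "min (q c) y" "max (q c) y" x] that
        \<open>in_gap w n c y\<close> roots by (cases "q c \<le> y") (auto simp: min_def max_def)
    show "0 < (-1) ^ c * poly h (q c)"
      using assms(3) that(1) by blast
  qed
  with mono w show ?thesis
    unfolding alternating_roots_def by blast
qed

lemma strict_mono_on_extend:
  fixes z :: "nat \<Rightarrow> 'a::order"
  assumes "strict_mono_on {..<k} z" "\<forall>i<k. z i < b"
  shows "strict_mono_on {..k} (\<lambda>i. if i < k then z i else b)"
  unfolding lessThan_Suc_atMost[symmetric] using assms
  by (intro strict_mono_on_lessThanI) (auto simp: strict_mono_onD)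

lemma strict_mono_on_prepend:
  fixes z :: "nat \<Rightarrow> 'a::order"
  assumes "strict_mono_on {..<k} z" "\<forall>i<k. a < z i"
  shows "strict_mono_on {..k} (\<lambda>i. if i = 0 then a else z (i - 1))"
  unfolding lessThan_Suc_atMost[symmetric] using assms
  by (intro strict_mono_on_lessThanI) (auto simp: strict_mono_onD gr0_conv_Suc)

section \<open>Interlacing roots on a block\<close>

text \<open>s = 1 describes the a-part of r and s = -1 the b-part.\<close>
definition coeff_block :: "(nat \<Rightarrow> real) \<Rightarrow> (nat \<Rightarrow> real) \<Rightarrow> nat \<Rightarrow> nat \<Rightarrow> real \<Rightarrow> bool" where
  "coeff_block al be lo hi s \<longleftrightarrow> (\<forall>j. lo \<le> j \<and> j < hi \<longrightarrow> 1 \<le> al j \<and> 1 \<le> s * be j)"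

lemma coeff_block_mono:
  "coeff_block al be lo hi s \<Longrightarrow> lo \<le> lo' \<Longrightarrow> hi' \<le> hi \<Longrightarrow> coeff_block al be lo' hi' s"
  by (auto simp: coeff_block_def)

lemma cont_pair_at_4:
  assumes "coeff_block al be 0 k (-1)"
  defines "X \<equiv> cont_pair al be 4 (1, 0) k"
  shows "0 < (-1) ^ k * fst X \<and> 0 \<le> (-1) ^ k * fst X + 2 * ((-1) ^ k * snd X)"
  unfolding X_def using assms(1) by (intro cont_pair_alternating_sign) (auto simp: coeff_block_def)

text \<open>The induction step samples G_(k+1) at the roots of F_k and at 4, then F_(k+1) at 0, at the
  roots of G_(k+1) and at 4; cont_pair_at_4 gives the sign at 4.\<close>
lemma interlacing_roots_snd:
  assumes "coeff_block al be 0 (Suc k) (-1)"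
    and z: "alternating_roots (fst (cont_poly al be k)) k z"
    and z_sign: "\<forall>i<k. z i < 4 \<and> 0 < (-1) ^ i * poly (snd (cont_poly al be k)) (z i)"
  shows "\<exists>\<eta>. alternating_roots (snd (cont_poly al be (Suc k))) k \<eta>
    \<and> (\<forall>i<k. z i < \<eta> i \<and> \<eta> i < (if Suc i < k then z (Suc i) else 4))"
proof -
  define s where "s = (\<lambda>i. if i < k then z i else 4)"
  have "strict_mono_on {..k} s"
    unfolding s_def using z z_sign
    by (intro strict_mono_on_extend) (auto simp: alternating_roots_def)
  moreover have "0 < (-1) ^ i * poly (snd (cont_poly al be (Suc k))) (s i)" if "i \<le> k" for i
  proof (cases "i < k")
    case True
    then show ?thesis
      using z z_sign by (simp add: s_def alternating_roots_def poly_cont_poly cont_step_def)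
  next
    case False
    define X where "X = cont_pair al be 4 (1, 0) k"
    have "0 < (-1) ^ k * fst X" "0 \<le> (-1) ^ k * fst X + 2 * ((-1) ^ k * snd X)"
      using cont_pair_at_4[OF coeff_block_mono[OF assms(1)]] by (auto simp: X_def)
    moreover have "1 \<le> al k"
      using assms(1) by (simp add: coeff_block_def)
    then have "(-1) ^ k * fst X \<le> al k * ((-1) ^ k * fst X)"
      using mult_right_mono[of 1 "al k" "(-1) ^ k * fst X"] calculation(1) by simp
    ultimately have "0 < (-1) ^ k * snd X + al k * ((-1) ^ k * fst X)"
      by linarith
    with False that show ?thesis
      by (simp add: s_def poly_cont_poly cont_step_def X_def algebra_simps)
  qed
  moreover have "degree (snd (cont_poly al be (Suc k))) \<le> k"
    using degree_cont_poly[of al be "Suc k"] by simp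
  ultimately obtain \<eta> where "alternating_roots (snd (cont_poly al be (Suc k))) k \<eta>"
    "\<forall>i<k. s i < \<eta> i \<and> \<eta> i < s (Suc i)"
    using alternating_roots_of_samples[of _ k s] by blast
  then show ?thesis
    by (intro exI[of _ \<eta>]) (auto simp: s_def)
qed

lemma interlacing_roots_fst:
  assumes "coeff_block al be 0 (Suc k) (-1)"
    and z: "alternating_roots (fst (cont_poly al be k)) k z" "\<forall>i<k. 0 < z i \<and> z i < 4"
    and \<eta>: "alternating_roots (snd (cont_poly al be (Suc k))) k \<eta>"
      "\<forall>i<k. z i < \<eta> i \<and> \<eta> i < (if Suc i < k then z (Suc i) else 4)"
  shows "\<exists>w. alternating_roots (fst (cont_poly al be (Suc k))) (Suc k) w
    \<and> (\<forall>i\<le>k. 0 < w i \<and> w i < 4 \<and> 0 < (-1) ^ i * poly (snd (cont_poly al be (Suc k))) (w i))"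
proof -
  define q where "q = (\<lambda>i. if i = 0 then 0 else if i - 1 < k then \<eta> (i - 1) else 4)"
  have \<eta>_bounds: "0 < \<eta> j \<and> \<eta> j < 4" if "j < k" for j
    using z(2) \<eta>(2) that by (smt (verit) Suc_lessD)
  have q_bounds: "0 \<le> q i \<and> q i \<le> 4" for i
    using \<eta>_bounds[of "i - 1"] by (auto simp: q_def less_imp_le)
  have "strict_mono_on {..Suc k} q"
    unfolding q_def using \<eta>(1) \<eta>_bounds
    by (intro strict_mono_on_prepend strict_mono_on_extend[simplified lessThan_Suc_atMost[symmetric]])
      (auto simp: alternating_roots_def)
  moreover have "0 < (-1) ^ i * poly (fst (cont_poly al be (Suc k))) (q i)" if i: "i \<le> Suc k" for i
  proof -
    consider "i = 0" | j where "i = Suc j" "j < k" | "i = Suc k"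
      using i by (cases i) (auto simp: le_less)
    then show ?thesis
    proof cases
      case 1
      then show ?thesis
        using fst_cont_pair_at_0[of al be "Suc k"] by (simp add: q_def poly_cont_poly)
    next
      case 2
      have "in_gap z k (Suc j) (\<eta> j)" "Suc j \<le> k"
        using \<eta>(2) 2 by (auto simp: in_gap_def split: if_splits)
      with z(1) have "0 < (-1) ^ Suc j * poly (fst (cont_poly al be k)) (\<eta> j)"
        unfolding alternating_roots_def by blast
      moreover have "poly (snd (cont_poly al be (Suc k))) (\<eta> j) = 0"
        using \<eta>(1) 2 unfolding alternating_roots_def by blast
      ultimately show ?thesis
        using 2 by (simp add: q_def poly_cont_poly cont_step_def)
    next
      case 3
      then show ?thesis
        using cont_pair_at_4[OF assms(1)] by (simp add: q_def poly_cont_poly)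
    qed
  qed
  moreover have "degree (fst (cont_poly al be (Suc k))) \<le> Suc k"
    using degree_cont_poly by blast
  ultimately obtain w where w: "alternating_roots (fst (cont_poly al be (Suc k))) (Suc k) w"
    "\<forall>i<Suc k. q i < w i \<and> w i < q (Suc i)"
    using alternating_roots_of_samples[of _ "Suc k" q] by blast
  have "in_gap \<eta> k i (w i)" if "i \<le> k" for i
    using w(2)[rule_format, of i] that by (auto simp: in_gap_def q_def split: if_splits)
  then have "0 < (-1) ^ i * poly (snd (cont_poly al be (Suc k))) (w i)" if "i \<le> k" for i
    using \<eta>(1) that by (simp add: alternating_roots_def)
  moreover have "0 < w i" "w i < 4" if "i \<le> k" for i
    using w(2)[rule_format, of i] q_bounds[of i] q_bounds[of "Suc i"] that by auto
  ultimately show ?thesis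
    using w(1) by blast
qed

lemma cont_poly_alternating_roots:
  assumes "coeff_block al be 0 k (-1)"
  shows "\<exists>z. alternating_roots (fst (cont_poly al be k)) k z
    \<and> (\<forall>i<k. 0 < z i \<and> z i < 4 \<and> 0 < (-1) ^ i * poly (snd (cont_poly al be k)) (z i))"
  using assms
proof (induction k)
  case 0
  show ?case
    by (simp add: alternating_roots_def in_gap_def cont_poly_def)
next
  case (Suc k)
  have "coeff_block al be 0 k (-1)"
    using Suc.prems by (rule coeff_block_mono) auto
  with Suc.IH obtain z where z: "alternating_roots (fst (cont_poly al be k)) k z"
    "\<forall>i<k. 0 < z i \<and> z i < 4 \<and> 0 < (-1) ^ i * poly (snd (cont_poly al be k)) (z i)"
    by blast
  then obtain \<eta> where "alternating_roots (snd (cont_poly al be (Suc k))) k \<eta>"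
    "\<forall>i<k. z i < \<eta> i \<and> \<eta> i < (if Suc i < k then z (Suc i) else 4)"
    using interlacing_roots_snd[OF Suc.prems] by blast
  then obtain w where "alternating_roots (fst (cont_poly al be (Suc k))) (Suc k) w"
    "\<forall>i\<le>k. 0 < w i \<and> w i < 4 \<and> 0 < (-1) ^ i * poly (snd (cont_poly al be (Suc k))) (w i)"
    using interlacing_roots_fst[OF Suc.prems z(1)] z(2) by blast
  then show ?case
    using less_Suc_eq_le by blast
qed

lemma coeff_block_shift:
  "coeff_block al be k (k + l) s = coeff_block (\<lambda>j. al (k + j)) (\<lambda>j. be (k + j)) 0 l s"
  by (auto simp: coeff_block_def le_iff_add)

lemma card_cont_pair_roots_mono:
  fixes al be :: "nat \<Rightarrow> real"
  assumes "n \<le> card {x \<in> A. fst (cont_pair al be x (1, 0) k) = 0}" "A \<subseteq> B"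
  shows "n \<le> card {x \<in> B. fst (cont_pair al be x (1, 0) k) = 0}"
proof -
  have "finite {x \<in> B. fst (cont_pair al be x (1, 0) k) = 0}"
    by (rule finite_subset[OF _ finite_cont_pair_roots]) auto
  then show ?thesis
    using assms by (force intro: order.trans[OF _ card_mono])
qed

lemma card_cont_pair_roots_of_samples:
  fixes al be :: "nat \<Rightarrow> real"
  assumes "strict_mono_on {..n} q" "\<forall>i\<le>n. 0 < (-1) ^ i * fst (cont_pair al be (q i) (1, 0) k)"
    and "{q 0<..<q n} \<subseteq> A"
  shows "n \<le> card {y \<in> A. fst (cont_pair al be y (1, 0) k) = 0}"
proof -
  have "n \<le> card {x \<in> {q 0<..<q n}. poly (fst (cont_poly al be k)) x = 0}"
    using assms(1,2) by (intro card_roots_of_samples) (simp_all add: poly_cont_poly)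
  then show ?thesis
    unfolding poly_cont_poly using assms(3) by (rule card_cont_pair_roots_mono)
qed

lemma sign_at_prefix_root:
  fixes al be :: "nat \<Rightarrow> real"
  assumes "fst (cont_pair al be y (1, 0) k) = 0" "0 < s * snd (cont_pair al be y (1, 0) k)"
    and "0 < fst (cont_pair (\<lambda>j. al (k + j)) (\<lambda>j. be (k + j)) y (0, 1) l)"
  shows "0 < s * fst (cont_pair al be y (1, 0) (k + l))"
proof -
  have "s * fst (cont_pair al be y (1, 0) (k + l))
      = (s * snd (cont_pair al be y (1, 0) k))
        * fst (cont_pair (\<lambda>j. al (k + j)) (\<lambda>j. be (k + j)) y (0, 1) l)"
    using assms(1) by (simp add: cont_pair_append)
  then show ?thesis
    using assms(2,3) by (simp only: mult_pos_pos)
qed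

text \<open>At a root of the suffix the determinant identity gives snd Y * fst Y' = -1, so the prefix
  only contributes the positive factor snd (cont_pair al be y (1, 0) k).\<close>
lemma sign_at_suffix_root:
  fixes al be :: "nat \<Rightarrow> real" and y :: real and k l :: nat
  defines "Y \<equiv> cont_pair (\<lambda>j. al (k + j)) (\<lambda>j. be (k + j)) y (1, 0) l"
  assumes "0 < snd (cont_pair al be y (1, 0) k)" "fst Y = 0" "0 < s * snd Y"
  shows "0 < - s * fst (cont_pair al be y (1, 0) (k + l))"
proof -
  define Y' where "Y' = cont_pair (\<lambda>j. al (k + j)) (\<lambda>j. be (k + j)) y (0, 1) l"
  have "fst Y * snd Y' - snd Y * fst Y' = 1"
    unfolding Y_def Y'_def by (rule cont_pair_det)
  then have prod: "(s * snd Y) * (- s * fst Y') = s * s"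
    using assms(3) by (simp add: algebra_simps)
  have "s \<noteq> 0"
    using assms(4) by auto
  then have "0 < (s * snd Y) * (- s * fst Y')"
    unfolding prod by (auto simp: zero_less_mult_iff linorder_neq_iff)
  then have "0 < - s * fst Y'"
    using assms(4) by (rule zero_less_mult_pos)
  moreover have "- s * fst (cont_pair al be y (1, 0) (k + l))
      = snd (cont_pair al be y (1, 0) k) * (- s * fst Y')"
    using assms(3) by (simp add: cont_pair_append Y_def Y'_def algebra_simps)
  ultimately show ?thesis
    using assms(2) by (metis mult_pos_pos)
qed

lemma card_roots_first_block:
  assumes "0 < l" "coeff_block al be 0 k (-1)" "coeff_block al be k (k + l) 1"
  shows "k \<le> card {y \<in> {0<..<4}. fst (cont_pair al be y (1, 0) (k + l)) = 0}"
proof -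
  have suffix: "\<forall>j<l. 1 \<le> al (k + j) \<and> 1 \<le> be (k + j)"
    using assms(3) by (simp add: coeff_block_shift coeff_block_def)
  obtain z where z: "alternating_roots (fst (cont_poly al be k)) k z"
    "\<forall>i<k. 0 < z i \<and> z i < 4 \<and> 0 < (-1) ^ i * poly (snd (cont_poly al be k)) (z i)"
    using cont_poly_alternating_roots[OF assms(2)] by blast
  define q where "q = (\<lambda>i. if i < k then z i else 4)"
  have "strict_mono_on {..k} q"
    unfolding q_def using z by (intro strict_mono_on_extend) (auto simp: alternating_roots_def)
  moreover have "0 < (-1) ^ i * fst (cont_pair al be (q i) (1, 0) (k + l))" if "i \<le> k" for i
  proof (cases "i < k")
    case True
    have "0 < fst (cont_pair (\<lambda>j. al (k + j)) (\<lambda>j. be (k + j)) (z i) (0, 1) l)"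
      using assms(1) suffix z(2) True by (intro cont_pair_pos[THEN conjunct1]) auto
    with True z show ?thesis
      by (intro sign_at_prefix_root) (auto simp: q_def alternating_roots_def poly_cont_poly)
  next
    case False
    define X where "X = cont_pair al be 4 (1, 0) k"
    have "0 < (-1) ^ k * fst (cont_pair (\<lambda>j. al (k + j)) (\<lambda>j. be (k + j)) 4 (fst X, snd X) l)"
      using cont_pair_at_4[OF assms(2)] suffix
      by (intro cont_pair_cone[THEN conjunct1]) (auto simp: X_def)
    with False that show ?thesis
      by (simp add: q_def cont_pair_add X_def)
  qed
  moreover have "{q 0<..<q k} \<subseteq> {0<..<4}"
    using z(2)[rule_format, of 0] by (cases "k = 0") (auto simp: q_def)
  ultimately show ?thesis
    by (intro card_cont_pair_roots_of_samples) auto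
qed

lemma card_roots_second_block:
  assumes "0 < k" "coeff_block al be 0 k 1" "coeff_block al be k (k + l) (-1)"
  shows "l \<le> card {y \<in> {0<..<4}. fst (cont_pair al be y (1, 0) (k + l)) = 0}"
proof -
  define al' where "al' = (\<lambda>j. al (k + j))"
  define be' where "be' = (\<lambda>j. be (k + j))"
  obtain z where z: "alternating_roots (fst (cont_poly al' be' l)) l z"
    "\<forall>i<l. 0 < z i \<and> z i < 4 \<and> 0 < (-1) ^ i * poly (snd (cont_poly al' be' l)) (z i)"
    using cont_poly_alternating_roots[of al' be' l] assms(3)
    by (auto simp: coeff_block_shift al'_def be'_def)
  define q where "q = (\<lambda>i. if i = 0 then 0 else z (i - 1))"
  have "strict_mono_on {..l} q"
    unfolding q_def using z by (intro strict_mono_on_prepend) (auto simp: alternating_roots_def)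
  moreover have "0 < (-1) ^ i * fst (cont_pair al be (q i) (1, 0) (k + l))" if "i \<le> l" for i
  proof (cases i)
    case 0
    then show ?thesis
      by (simp add: q_def fst_cont_pair_at_0)
  next
    case (Suc j)
    have "0 < snd (cont_pair al be (z j) (1, 0) k)"
      using assms(1,2) z(2) Suc that
      by (intro cont_pair_pos[THEN conjunct2]) (auto simp: coeff_block_def)
    with Suc that z have "0 < - ((-1) ^ j) * fst (cont_pair al be (z j) (1, 0) (k + l))"
      by (intro sign_at_suffix_root)
        (auto simp: alternating_roots_def poly_cont_poly al'_def be'_def)
    with Suc show ?thesis
      by (simp add: q_def)
  qed
  moreover have "{q 0<..<q l} \<subseteq> {0<..<4}"
    using z(2)[rule_format, of "l - 1"] by (cases "l = 0") (auto simp: q_def)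
  ultimately show ?thesis
    by (intro card_cont_pair_roots_of_samples) auto
qed

lemma coeff_block_uminus:
  "coeff_block al (\<lambda>j. - be j) lo hi s = coeff_block al be lo hi (- s)"
  by (simp add: coeff_block_def)

lemma card_cont_pair_roots_uminus:
  "card {y \<in> uminus ` A. fst (cont_pair al be y (1, 0) k) = 0}
     = card {w \<in> A. fst (cont_pair al (\<lambda>j. - be j) w (1, 0) k) = 0}"
proof -
  have "{y \<in> uminus ` A. fst (cont_pair al be y (1, 0) k) = 0}
      = uminus ` {w \<in> A. fst (cont_pair al (\<lambda>j. - be j) w (1, 0) k) = 0}"
    by (auto simp: cont_pair_uminus[symmetric])
  then show ?thesis
    by (simp add: card_image)
qed

text \<open>Negating beta exchanges the two kinds of blocks and reflects the roots (cont_pair_uminus),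
  turning roots in (0, 4) into roots in (-4, 0).\<close>
lemma cont_pair_root_counts:
  fixes al be :: "nat \<Rightarrow> real"
  assumes "0 < m" "0 < p"
    and "coeff_block al be 0 m 1 \<and> coeff_block al be m (m + p) (-1)
       \<or> coeff_block al be 0 p (-1) \<and> coeff_block al be p (p + m) 1"
  shows "p \<le> card {y \<in> {0<..}. fst (cont_pair al be y (1, 0) (m + p)) = 0}
    \<and> m \<le> card {y \<in> {-4<..<0}. fst (cont_pair al be y (1, 0) (m + p)) = 0}"
proof
  have "p \<le> card {y \<in> {0<..<4}. fst (cont_pair al be y (1, 0) (m + p)) = 0}"
    using assms card_roots_second_block[of m al be p] card_roots_first_block[of m al be p]
    by (auto simp: add.commute)
  then show "p \<le> card {y \<in> {0<..}. fst (cont_pair al be y (1, 0) (m + p)) = 0}"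
    by (rule card_cont_pair_roots_mono) auto
  have "m \<le> card {w \<in> {0<..<4}. fst (cont_pair al (\<lambda>j. - be j) w (1, 0) (m + p)) = 0}"
    using assms card_roots_first_block[of p al "\<lambda>j. - be j" m]
      card_roots_second_block[of p al "\<lambda>j. - be j" m]
    by (auto simp: coeff_block_uminus add.commute)
  then show "m \<le> card {y \<in> {-4<..<0}. fst (cont_pair al be y (1, 0) (m + p)) = 0}"
    using card_cont_pair_roots_uminus[of "{0<..<4}" al be "m + p"] by simp
qed

section \<open>The substitution y = (t - 1)^2 / t\<close>

text \<open>t lies in the fibre over y iff t + 1/t = y + 2.\<close>
definition joukowski_fibre :: "real \<Rightarrow> complex set" where
  "joukowski_fibre y = {t. t\<^sup>2 - (of_real y + 2) * t + 1 = 0}"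

lemma joukowski_fibre_iff_square:
  "t \<in> joukowski_fibre y \<longleftrightarrow> (2 * t - (of_real y + 2))\<^sup>2 = of_real (y\<^sup>2 + 4 * y)"
proof -
  have "t \<in> joukowski_fibre y \<longleftrightarrow> 4 * (t\<^sup>2 - (of_real y + 2) * t + 1) = 0"
    by (subst mult_eq_0_iff) (simp add: joukowski_fibre_def)
  also have "4 * (t\<^sup>2 - (of_real y + 2) * t + 1)
      = (2 * t - (of_real y + 2))\<^sup>2 - of_real (y\<^sup>2 + 4 * y)"
    by (simp add: power2_eq_square algebra_simps)
  finally show ?thesis
    by simp
qed

lemma joukowski_fibre_eq:
  assumes "y\<^sup>2 + 4 * y \<noteq> 0"
  defines "s \<equiv> of_real y + 2" and "d \<equiv> csqrt (of_real (y\<^sup>2 + 4 * y))"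
  shows "joukowski_fibre y = {(s + d) / 2, (s - d) / 2}" "d \<noteq> 0"
proof -
  have "t \<in> joukowski_fibre y \<longleftrightarrow> t = (s + d) / 2 \<or> t = (s - d) / 2" for t
  proof -
    have "t \<in> joukowski_fibre y \<longleftrightarrow> (2 * t - s)\<^sup>2 = d\<^sup>2"
      unfolding joukowski_fibre_iff_square s_def d_def by simp
    also have "\<dots> \<longleftrightarrow> 2 * t - s = d \<or> 2 * t - s = - d"
      by (rule power2_eq_iff)
    also have "\<dots> \<longleftrightarrow> t = (s + d) / 2 \<or> t = (s - d) / 2"
      by (auto simp: field_simps)
    finally show ?thesis .
  qed
  then show "joukowski_fibre y = {(s + d) / 2, (s - d) / 2}"
    by blast
  show "d \<noteq> 0"
    using assms(1) by (simp only: d_def csqrt_eq_0 of_real_eq_0_iff not_False_eq_True)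
qed

lemma card_joukowski_fibre:
  assumes "y\<^sup>2 + 4 * y \<noteq> 0"
  shows "card (joukowski_fibre y) = 2"
  using joukowski_fibre_eq[OF assms] by (simp add: field_simps)

lemma joukowski_fibre_real:
  assumes "0 < y\<^sup>2 + 4 * y"
  shows "joukowski_fibre y \<subseteq> \<real>"
proof -
  have "csqrt (of_real (y\<^sup>2 + 4 * y)) = of_real (sqrt (y\<^sup>2 + 4 * y))"
    using assms by (simp add: csqrt_of_real)
  then show ?thesis
    using joukowski_fibre_eq[of y] assms by (auto simp del: of_real_add of_real_power)
qed

lemma joukowski_fibre_nonreal:
  assumes "y\<^sup>2 + 4 * y < 0" "t \<in> joukowski_fibre y"
  shows "t \<notin> \<real>"
proof
  assume "t \<in> \<real>"
  then obtain x where "t = of_real x"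
    by (auto elim: Reals_cases)
  with assms(2) have "of_real ((2 * x - (y + 2))\<^sup>2) = (of_real (y\<^sup>2 + 4 * y) :: complex)"
    unfolding joukowski_fibre_iff_square by simp
  then have "(2 * x - (y + 2))\<^sup>2 = y\<^sup>2 + 4 * y"
    using of_real_eq_iff by blast
  with assms(1) show False
    by (metis zero_le_power2 not_le)
qed

text \<open>The fibre is closed under conjugation and its two points multiply to 1.\<close>
lemma joukowski_fibre_unit:
  assumes "t \<in> joukowski_fibre y" "t \<notin> \<real>"
  shows "cmod t = 1"
proof -
  define s :: complex where "s = of_real y + 2"
  have t: "t\<^sup>2 - s * t + 1 = 0"
    using assms(1) by (simp add: joukowski_fibre_def s_def)
  have "cnj (t\<^sup>2 - s * t + 1) = 0"
    using t by simp
  then have ct: "(cnj t)\<^sup>2 - s * cnj t + 1 = 0"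
    by (simp add: s_def)
  have "(t - cnj t) * (t + cnj t - s) = (t\<^sup>2 - s * t + 1) - ((cnj t)\<^sup>2 - s * cnj t + 1)"
    by (simp add: power2_eq_square algebra_simps)
  also have "\<dots> = 0"
    using t ct by simp
  finally have "(t - cnj t) * (t + cnj t - s) = 0" .
  moreover have "t - cnj t \<noteq> 0"
    using assms(2) Reals_cnj_iff[of t] by simp
  ultimately have "cnj t = s - t"
    by (simp only: mult_eq_0_iff) (simp add: algebra_simps)
  then have "t * cnj t = t * (s - t)"
    by simp
  also have "\<dots> = - (t\<^sup>2 - s * t + 1) + 1"
    by (simp add: power2_eq_square algebra_simps)
  finally have "complex_of_real ((cmod t)\<^sup>2) = 1"
    using t by (simp add: complex_norm_square[symmetric])
  then have "(cmod t)\<^sup>2 = 1"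
    using of_real_eq_1_iff by blast
  then show ?thesis
    using norm_ge_zero[of t] by (auto simp: power2_eq_1_iff)
qed

lemma joukowski_fibres_disjoint:
  assumes "y \<noteq> y'"
  shows "joukowski_fibre y \<inter> joukowski_fibre y' = {}"
proof -
  have "y = y'" if "t \<in> joukowski_fibre y" "t \<in> joukowski_fibre y'" for t
  proof -
    have "t \<noteq> 0"
      using that(1) by (auto simp: joukowski_fibre_def)
    have "t * (of_real y' - of_real y)
        = (t\<^sup>2 - (of_real y + 2) * t + 1) - (t\<^sup>2 - (of_real y' + 2) * t + 1)"
      by (simp add: algebra_simps)
    also have "\<dots> = 0"
      using that by (simp add: joukowski_fibre_def)
    finally have "t * (of_real y' - of_real y) = 0" .
    with \<open>t \<noteq> 0\<close> have "of_real y' = (of_real y :: complex)"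
      by simp
    then show "y = y'"
      by simp
  qed
  with assms show ?thesis by blast
qed

lemma card_UN_joukowski_fibre:
  assumes "finite Y" "\<forall>y\<in>Y. y\<^sup>2 + 4 * y \<noteq> 0"
  shows "card (\<Union>y\<in>Y. joukowski_fibre y) = 2 * card Y"
proof -
  have "finite (joukowski_fibre y)" if "y \<in> Y" for y
    using joukowski_fibre_eq(1)[of y] assms(2) that by simp
  then have "card (\<Union>y\<in>Y. joukowski_fibre y) = (\<Sum>y\<in>Y. card (joukowski_fibre y))"
    using assms(1) joukowski_fibres_disjoint by (intro card_UN_disjoint) auto
  also have "\<dots> = 2 * card Y"
    using assms(2) by (simp add: card_joukowski_fibre)
  finally show ?thesis .
qed

section \<open>The Alexander polynomial as a continuant\<close>

definition tridiag :: "nat \<Rightarrow> (nat \<Rightarrow> 'a::comm_ring_1) \<Rightarrow> 'a \<Rightarrow> 'a \<Rightarrow> 'a mat" where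
  "tridiag n d u l = mat n n (\<lambda>(i, j).
     if i = j then d i else if j = Suc i then u else if i = Suc j then l else 0)"

fun continuant :: "(nat \<Rightarrow> 'a::comm_ring_1) \<Rightarrow> 'a \<Rightarrow> nat \<Rightarrow> 'a" where
  "continuant d c 0 = 1"
| "continuant d c (Suc 0) = d 0"
| "continuant d c (Suc (Suc k)) = d (Suc k) * continuant d c (Suc k) - c * continuant d c k"

lemma tridiag_carrier: "tridiag n d u l \<in> carrier_mat n n"
  by (simp add: tridiag_def)

lemma mat_delete_tridiag_last: "mat_delete (tridiag (Suc n) d u l) n n = tridiag n d u l"
  by (rule eq_matI) (auto simp: mat_delete_def tridiag_def)

lemma det_tridiag_minor:
  "det (mat_delete (tridiag (Suc (Suc k)) d u l) (Suc k) k) = u * det (tridiag k d u l)"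
proof -
  define B where "B = mat_delete (tridiag (Suc (Suc k)) d u l) (Suc k) k"
  have B: "B \<in> carrier_mat (Suc k) (Suc k)"
    unfolding B_def using mat_delete_carrier[OF tridiag_carrier[of "Suc (Suc k)" d u l]] by simp
  have B_entry: "B $$ (i, j) = tridiag (Suc (Suc k)) d u l $$ (i, if j < k then j else Suc j)"
    if "i < Suc k" "j < Suc k" for i j
    using that by (simp add: B_def mat_delete_def tridiag_def)
  have "det B = (\<Sum>i<Suc k. B $$ (i, k) * cofactor B i k)"
    by (rule laplace_expansion_column[OF B]) simp
  also have "\<dots> = B $$ (k, k) * cofactor B k k"
    by (auto simp: B_entry tridiag_def intro!: sum.neutral)
  also have "mat_delete B k k = tridiag k d u l"
    by (rule eq_matI) (auto simp: mat_delete_def B_def tridiag_def)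
  then have "B $$ (k, k) * cofactor B k k = u * det (tridiag k d u l)"
    by (simp add: B_entry tridiag_def cofactor_def)
  finally show ?thesis
    by (simp add: B_def)
qed

lemma det_tridiag_Suc_Suc:
  "det (tridiag (Suc (Suc k)) d u l)
     = d (Suc k) * det (tridiag (Suc k) d u l) - u * l * det (tridiag k d u l)"
proof -
  define A where "A = tridiag (Suc (Suc k)) d u l"
  have A: "A \<in> carrier_mat (Suc (Suc k)) (Suc (Suc k))"
    by (simp add: A_def tridiag_carrier)
  have "det A = (\<Sum>j<Suc (Suc k). A $$ (Suc k, j) * cofactor A (Suc k) j)"
    by (rule laplace_expansion_row[OF A]) simp
  also have "\<dots> = A $$ (Suc k, k) * cofactor A (Suc k) k
      + A $$ (Suc k, Suc k) * cofactor A (Suc k) (Suc k)"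
    by (simp add: A_def tridiag_def sum.neutral)
  also have "A $$ (Suc k, k) = l"
    by (simp add: A_def tridiag_def)
  also have "A $$ (Suc k, Suc k) = d (Suc k)"
    by (simp add: A_def tridiag_def)
  also have "l * cofactor A (Suc k) k + d (Suc k) * cofactor A (Suc k) (Suc k)
      = d (Suc k) * det (tridiag (Suc k) d u l) - u * l * det (tridiag k d u l)"
    using det_tridiag_minor[of k d u l]
    by (simp add: A_def cofactor_def mat_delete_tridiag_last algebra_simps)
  finally show ?thesis
    by (simp add: A_def)
qed

lemma det_tridiag: "det (tridiag n d u l) = continuant d (u * l) n"
proof (induction d "u * l" n rule: continuant.induct)
  case (2 d)
  show ?case
    using det_single[OF tridiag_carrier[of 1 d u l]] by (simp add: tridiag_def)
next
  case (3 d k)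
  then show ?case
    by (simp add: det_tridiag_Suc_Suc)
qed (simp add: det_dim_zero[OF tridiag_carrier])

lemma (in comm_ring_hom) continuant_hom:
  "hom (continuant d c n) = continuant (\<lambda>i. hom (d i)) (hom c) n"
  by (induction d c n rule: continuant.induct) (simp_all add: hom_distribs)

lemma continuant_even_odd:
  fixes t y :: "'a::comm_ring_1" and c :: "nat \<Rightarrow> 'a"
  assumes y: "y * t = (t - 1)\<^sup>2"
  defines "D \<equiv> continuant (\<lambda>i. c i * (t - 1)) (- t)"
    and "X \<equiv> cont_pair (\<lambda>j. c (2 * j)) (\<lambda>j. c (2 * j + 1)) y (1, 0)"
  shows "D (2 * j) = t ^ j * fst (X j) \<and> D (2 * j + 1) = t ^ j * (t - 1) * snd (X (Suc j))"
proof (induction j)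
  case 0
  show ?case
    by (simp add: D_def X_def cont_step_def)
next
  case (Suc j)
  then have IH: "D (2 * j) = t ^ j * fst (X j)" "D (2 * j + 1) = t ^ j * (t - 1) * snd (X (Suc j))"
    by simp_all
  have "D (2 * Suc j) = c (2 * j + 1) * (t - 1) * D (2 * j + 1) + t * D (2 * j)"
    by (simp add: D_def numeral_2_eq_2)
  also have "\<dots> = t ^ j * (c (2 * j + 1) * (t - 1)\<^sup>2 * snd (X (Suc j)) + t * fst (X j))"
    unfolding IH by (simp add: power2_eq_square algebra_simps)
  also have "\<dots> = t ^ Suc j * fst (X (Suc j))"
    unfolding y[symmetric] by (simp add: X_def cont_step_def algebra_simps)
  finally have even: "D (2 * Suc j) = t ^ Suc j * fst (X (Suc j))" .
  have "D (2 * Suc j + 1) = c (2 * Suc j) * (t - 1) * D (2 * Suc j) + t * D (2 * j + 1)"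
    by (simp add: D_def numeral_2_eq_2)
  also have "\<dots> = t ^ Suc j * (t - 1) * snd (X (Suc (Suc j)))"
    unfolding even IH(2) by (simp add: X_def cont_step_def algebra_simps)
  finally show ?case
    using even by simp
qed

lemma alexander_poly_tridiag:
  "alexander_poly r = det (tridiag (length r) (\<lambda>i. [:r ! i div 2:] * [:-1, 1:]) [:0, 1:] (-1))"
  unfolding alexander_poly_def
  by (intro arg_cong[where f = det] eq_matI)
    (auto simp: seifert_M_def tridiag_def one_pCons algebra_simps)

lemma poly_alexander_poly:
  "poly (map_poly complex_of_int (alexander_poly r)) t
     = continuant (\<lambda>i. of_int (r ! i div 2) * (t - 1)) (- t) (length r)"
  unfolding alexander_poly_tridiag det_tridiag
    of_int_poly_hom.continuant_hom poly_hom.continuant_hom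
  by (simp add: hom_distribs algebra_simps)

text \<open>The Seifert diagonal entries a_(2j+1) and a_(2j+2), counting from 1.\<close>
definition seifert_alpha :: "int list \<Rightarrow> nat \<Rightarrow> real" where
  "seifert_alpha r j = of_int (r ! (2 * j) div 2)"

definition seifert_beta :: "int list \<Rightarrow> nat \<Rightarrow> real" where
  "seifert_beta r j = of_int (r ! (2 * j + 1) div 2)"

lemma poly_alexander_poly_fibre:
  assumes "length r = 2 * N" "t \<in> joukowski_fibre y"
  shows "poly (map_poly complex_of_int (alexander_poly r)) t
    = t ^ N * of_real (fst (cont_pair (seifert_alpha r) (seifert_beta r) y (1, 0) N))"
proof -
  have "of_real y * t = (t - 1)\<^sup>2"
    using assms(2) by (simp add: joukowski_fibre_def power2_eq_square algebra_simps)
  moreover have "cont_pair (\<lambda>j. of_real (seifert_alpha r j)) (\<lambda>j. of_real (seifert_beta r j))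
        (of_real y) (1, 0) N
      = map_prod complex_of_real complex_of_real
          (cont_pair (seifert_alpha r) (seifert_beta r) y (1, 0) N)"
    using of_real_hom.cont_pair_hom[of "seifert_alpha r" "seifert_beta r" y 1 0 N] by simp
  ultimately show ?thesis
    using continuant_even_odd[of "of_real y" t "\<lambda>i. of_int (r ! i div 2)" N, THEN conjunct1]
    by (simp add: poly_alexander_poly assms(1) seifert_alpha_def seifert_beta_def)
qed

lemma degree_alexander_poly: "degree (alexander_poly r) \<le> length r"
proof -
  have "degree (alexander_poly r) \<le> 1 * length r"
    unfolding alexander_poly_def
    by (rule degree_det_le) (auto intro: order.trans[OF degree_diff_le])
  then show ?thesis by simp
qed

section \<open>Counting the zeros of the Alexander polynomial\<close>

lemma card_le_sum_order:
  fixes P :: "'a::idom poly"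
  assumes "P \<noteq> 0" "finite A" "\<forall>z\<in>A. poly P z = 0"
  shows "card A \<le> (\<Sum>z\<in>A. order z P)"
proof -
  have "(\<Sum>z\<in>A. 1) \<le> (\<Sum>z\<in>A. order z P)"
    using assms order_root[of P] by (intro sum_mono) (simp add: Suc_le_eq)
  then show ?thesis by simp
qed

lemma roots_real_or_unit_circle:
  fixes P :: "complex poly"
  assumes "P \<noteq> 0" "degree P \<le> 2 * m + 2 * p"
    and A: "finite A" "A \<subseteq> {z. poly P z = 0 \<and> z \<in> \<real>}" "2 * p \<le> card A"
    and B: "finite B" "B \<subseteq> {z. poly P z = 0 \<and> z \<notin> \<real> \<and> cmod z = 1}" "2 * m \<le> card B"
  shows "(\<forall>z. poly P z = 0 \<longrightarrow> z \<in> \<real> \<or> cmod z = 1)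
    \<and> (\<Sum>z\<in>{z. poly P z = 0 \<and> z \<in> \<real>}. order z P) = 2 * p
    \<and> (\<Sum>z\<in>{z. poly P z = 0 \<and> z \<notin> \<real>}. order z P) = 2 * m"
proof -
  define R where "R = {z. poly P z = 0 \<and> z \<in> \<real>}"
  define C where "C = {z. poly P z = 0 \<and> z \<notin> \<real>}"
  have fin: "finite R" "finite C"
    using poly_roots_finite[OF assms(1)] by (auto simp: R_def C_def intro: finite_subset)
  have "(\<Sum>z\<in>R. order z P) + (\<Sum>z\<in>C. order z P) = (\<Sum>z\<in>{z. poly P z = 0}. order z P)"
    by (subst sum.union_disjoint[symmetric]) (use fin in \<open>auto simp: R_def C_def intro: sum.cong\<close>)
  also have "\<dots> \<le> 2 * m + 2 * p"
    using sum_order_le_degree[OF assms(1)] assms(2) by simp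
  finally have total: "(\<Sum>z\<in>R. order z P) + (\<Sum>z\<in>C. order z P) \<le> 2 * m + 2 * p" .
  have "2 * p \<le> (\<Sum>z\<in>R. order z P)"
    using card_le_sum_order[OF assms(1) A(1)] A(2,3) sum_mono2[OF fin(1), of A "\<lambda>z. order z P"]
    by (force simp: R_def)
  moreover have sum_B: "2 * m \<le> (\<Sum>z\<in>B. order z P)"
    using card_le_sum_order[OF assms(1) B(1)] B(2,3) by force
  moreover have "(\<Sum>z\<in>B. order z P) \<le> (\<Sum>z\<in>C. order z P)"
    using B(2) by (intro sum_mono2[OF fin(2)]) (auto simp: C_def)
  ultimately have sums: "(\<Sum>z\<in>R. order z P) = 2 * p" "(\<Sum>z\<in>C. order z P) = 2 * m"
    using total by linarith+
  have "z \<in> \<real> \<or> cmod z = 1" if "poly P z = 0" for z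
  proof (rule ccontr)
    assume z: "\<not> (z \<in> \<real> \<or> cmod z = 1)"
    then have "z \<notin> B"
      using B(2) by auto
    have "order z P + (\<Sum>z\<in>B. order z P) = (\<Sum>z\<in>insert z B. order z P)"
      using B(1) \<open>z \<notin> B\<close> by simp
    also have "\<dots> \<le> (\<Sum>z\<in>C. order z P)"
      using B(2) z that by (intro sum_mono2[OF fin(2)]) (auto simp: C_def)
    finally show False
      using sums(2) sum_B order_root[of P z] that assms(1) by linarith
  qed
  with sums show ?thesis
    by (simp add: R_def C_def)
qed

lemma joukowski_fibres_of_roots:
  assumes "length r = 2 * N"
    and "Y \<subseteq> {y. fst (cont_pair (seifert_alpha r) (seifert_beta r) y (1, 0) N) = 0}"
    and "\<forall>y\<in>Y. y\<^sup>2 + 4 * y \<noteq> 0"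
  defines "T \<equiv> \<Union>y\<in>Y. joukowski_fibre y"
  shows "finite T" "card T = 2 * card Y"
    "\<forall>t\<in>T. poly (map_poly complex_of_int (alexander_poly r)) t = 0"
proof -
  have "finite Y"
    using finite_subset[OF assms(2) finite_cont_pair_roots] .
  moreover have "finite (joukowski_fibre y)" if "y \<in> Y" for y
    using card_joukowski_fibre[of y] assms(3) that by (intro card_ge_0_finite) auto
  ultimately show "finite T"
    by (simp add: T_def)
  show "card T = 2 * card Y"
    unfolding T_def using \<open>finite Y\<close> assms(3) by (rule card_UN_joukowski_fibre)
  show "\<forall>t\<in>T. poly (map_poly complex_of_int (alexander_poly r)) t = 0"
    using assms(2) by (auto simp: T_def poly_alexander_poly_fibre[OF assms(1)])
qed

lemma alexander_poly_real_zeros: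
  assumes "length r = 2 * N"
  defines "Y \<equiv> {y \<in> {0<..}. fst (cont_pair (seifert_alpha r) (seifert_beta r) y (1, 0) N) = 0}"
  shows "\<exists>A. finite A \<and> card A = 2 * card Y
    \<and> A \<subseteq> {z. poly (map_poly complex_of_int (alexander_poly r)) z = 0 \<and> z \<in> \<real>}"
proof -
  have disc: "0 < y\<^sup>2 + 4 * y" if "y \<in> Y" for y
    using that by (simp add: Y_def power2_eq_square add_pos_pos)
  have roots: "Y \<subseteq> {y. fst (cont_pair (seifert_alpha r) (seifert_beta r) y (1, 0) N) = 0}"
    by (auto simp: Y_def)
  have "\<forall>y\<in>Y. y\<^sup>2 + 4 * y \<noteq> 0"
    using disc by (metis less_irrefl)
  from joukowski_fibres_of_roots[OF assms(1) roots this] disc joukowski_fibre_real show ?thesis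
    by (intro exI[of _ "\<Union>y\<in>Y. joukowski_fibre y"]) blast
qed

lemma alexander_poly_unimodular_zeros:
  assumes "length r = 2 * N"
  defines "Y \<equiv> {y \<in> {-4<..<0}. fst (cont_pair (seifert_alpha r) (seifert_beta r) y (1, 0) N) = 0}"
  shows "\<exists>B. finite B \<and> card B = 2 * card Y
    \<and> B \<subseteq> {z. poly (map_poly complex_of_int (alexander_poly r)) z = 0 \<and> z \<notin> \<real> \<and> cmod z = 1}"
proof -
  have disc: "y\<^sup>2 + 4 * y < 0" if "y \<in> Y" for y
  proof -
    have "y * (y + 4) < 0"
      using that by (intro mult_neg_pos) (auto simp: Y_def)
    then show ?thesis
      by (simp add: power2_eq_square algebra_simps)
  qed
  have roots: "Y \<subseteq> {y. fst (cont_pair (seifert_alpha r) (seifert_beta r) y (1, 0) N) = 0}"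
    by (auto simp: Y_def)
  have "\<forall>y\<in>Y. y\<^sup>2 + 4 * y \<noteq> 0"
    using disc by (metis less_irrefl)
  from joukowski_fibres_of_roots[OF assms(1) roots this] disc
    joukowski_fibre_nonreal joukowski_fibre_unit
  show ?thesis
    by (intro exI[of _ "\<Union>y\<in>Y. joukowski_fibre y"]) blast
qed

lemma poly_alexander_poly_at_1:
  assumes "length r = 2 * N"
  shows "poly (map_poly complex_of_int (alexander_poly r)) 1 = 1"
proof -
  have "1 \<in> joukowski_fibre 0"
    by (simp add: joukowski_fibre_def)
  from poly_alexander_poly_fibre[OF assms this] show ?thesis
    by (simp add: fst_cont_pair_at_0)
qed

lemma alexander_poly_roots:
  fixes m p :: nat
  assumes "length r = 2 * (m + p)"
    and "p \<le> card {y \<in> {0<..}.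
      fst (cont_pair (seifert_alpha r) (seifert_beta r) y (1, 0) (m + p)) = 0}"
    and "m \<le> card {y \<in> {-4<..<0}.
      fst (cont_pair (seifert_alpha r) (seifert_beta r) y (1, 0) (m + p)) = 0}"
  defines "P \<equiv> map_poly complex_of_int (alexander_poly r)"
  shows "P \<noteq> 0
    \<and> (\<forall>z. poly P z = 0 \<longrightarrow> z \<in> \<real> \<or> cmod z = 1)
    \<and> (\<Sum>z\<in>{z. poly P z = 0 \<and> z \<in> \<real>}. order z P) = 2 * p
    \<and> (\<Sum>z\<in>{z. poly P z = 0 \<and> z \<notin> \<real>}. order z P) = 2 * m"
proof -
  have "P \<noteq> 0"
    using poly_alexander_poly_at_1[OF assms(1)] by (auto simp: P_def)
  moreover have "degree P \<le> 2 * m + 2 * p"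
    using degree_map_poly_le[of complex_of_int] degree_alexander_poly[of r] assms(1)
    by (simp add: P_def)
  moreover obtain A where "finite A" "2 * p \<le> card A" "A \<subseteq> {z. poly P z = 0 \<and> z \<in> \<real>}"
    using alexander_poly_real_zeros[OF assms(1)] assms(2) unfolding P_def by fastforce
  moreover obtain B where "finite B" "2 * m \<le> card B"
    "B \<subseteq> {z. poly P z = 0 \<and> z \<notin> \<real> \<and> cmod z = 1}"
    using alexander_poly_unimodular_zeros[OF assms(1)] assms(3) unfolding P_def by fastforce
  ultimately show ?thesis
    using roots_real_or_unit_circle[of P m p A B] by blast
qed

lemma signed_double_div_2: "((-1) ^ i * (2 * x)) div 2 = (-1) ^ i * (x :: int)"
  by (metis mult.left_commute nonzero_mult_div_cancel_left zero_neq_numeral)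

lemma positive_list_nth_ge_1: "\<forall>x\<in>set xs. (0::int) < x \<Longrightarrow> i < length xs \<Longrightarrow> 1 \<le> xs ! i"
  using nth_mem[of i xs] by fastforce

lemma coeff_blocks_ab:
  assumes "length a = 2 * m" "\<forall>x\<in>set a. x > 0" "length b = 2 * p" "\<forall>x\<in>set b. x > 0"
    and r: "r = map (\<lambda>x. 2 * x) a @ map (\<lambda>i. (-1) ^ i * (2 * b ! i)) [0..<2 * p]"
  shows "coeff_block (seifert_alpha r) (seifert_beta r) 0 m 1
    \<and> coeff_block (seifert_alpha r) (seifert_beta r) m (m + p) (-1)"
proof -
  have a: "r ! i div 2 = a ! i" if "i < 2 * m" for i
    using that assms(1) by (simp add: r nth_append)
  have b: "r ! (2 * m + i) div 2 = (-1) ^ i * b ! i" if "i < 2 * p" for i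
    using that assms(1) by (simp add: r nth_append signed_double_div_2)
  have "coeff_block (seifert_alpha r) (seifert_beta r) 0 m 1"
    using a positive_list_nth_ge_1[OF assms(2)] assms(1)
    by (auto simp: coeff_block_def seifert_alpha_def seifert_beta_def)
  moreover have "coeff_block (seifert_alpha r) (seifert_beta r) m (m + p) (-1)"
    unfolding coeff_block_shift
    using b[of "2 * _"] b[of "2 * _ + 1"] positive_list_nth_ge_1[OF assms(4)] assms(3)
    by (auto simp: coeff_block_def seifert_alpha_def seifert_beta_def algebra_simps)
  ultimately show ?thesis ..
qed

lemma coeff_blocks_ba:
  assumes "length a = 2 * m" "\<forall>x\<in>set a. x > 0" "length b = 2 * p" "\<forall>x\<in>set b. x > 0"
    and r: "r = map (\<lambda>i. (-1) ^ i * (2 * b ! i)) [0..<2 * p] @ map (\<lambda>x. 2 * x) a"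
  shows "coeff_block (seifert_alpha r) (seifert_beta r) 0 p (-1)
    \<and> coeff_block (seifert_alpha r) (seifert_beta r) p (p + m) 1"
proof -
  have b: "r ! i div 2 = (-1) ^ i * b ! i" if "i < 2 * p" for i
    using that by (simp add: r nth_append signed_double_div_2)
  have a: "r ! (2 * p + i) div 2 = a ! i" if "i < 2 * m" for i
    using that assms(1) by (simp add: r nth_append)
  have "coeff_block (seifert_alpha r) (seifert_beta r) 0 p (-1)"
    using b positive_list_nth_ge_1[OF assms(4)] assms(3)
    by (auto simp: coeff_block_def seifert_alpha_def seifert_beta_def)
  moreover have "coeff_block (seifert_alpha r) (seifert_beta r) p (p + m) 1"
    unfolding coeff_block_shift
    using a[of "2 * _"] a[of "2 * _ + 1"] positive_list_nth_ge_1[OF assms(2)] assms(1)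
    by (auto simp: coeff_block_def seifert_alpha_def seifert_beta_def algebra_simps)
  ultimately show ?thesis ..
qed

theorem theorem13p1:
  fixes m p :: nat and a b r :: "int list"
  assumes "m \<ge> 1" and "p \<ge> 1"
    and "length a = 2 * m" and "\<forall>x\<in>set a. x > 0"
    and "length b = 2 * p" and "\<forall>x\<in>set b. x > 0"
    and "r = map (\<lambda>x. 2 * x) a @ map (\<lambda>i. (-1) ^ i * (2 * b ! i)) [0..<2 * p]
       \<or> r = map (\<lambda>i. (-1) ^ i * (2 * b ! i)) [0..<2 * p] @ map (\<lambda>x. 2 * x) a"
  shows "map_poly complex_of_int (alexander_poly r) \<noteq> 0
    \<and> (\<forall>z. poly (map_poly complex_of_int (alexander_poly r)) z = 0
           \<longrightarrow> z \<in> \<real> \<or> cmod z = 1)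
    \<and> (\<Sum>z\<in>{z. poly (map_poly complex_of_int (alexander_poly r)) z = 0 \<and> z \<in> \<real>}.
         order z (map_poly complex_of_int (alexander_poly r))) = 2 * p
    \<and> (\<Sum>z\<in>{z. poly (map_poly complex_of_int (alexander_poly r)) z = 0 \<and> z \<notin> \<real>}.
         order z (map_poly complex_of_int (alexander_poly r))) = 2 * m"
proof -
  have "length r = 2 * (m + p)"
    using assms(3,5,7) by auto
  moreover have "coeff_block (seifert_alpha r) (seifert_beta r) 0 m 1
        \<and> coeff_block (seifert_alpha r) (seifert_beta r) m (m + p) (-1)
      \<or> coeff_block (seifert_alpha r) (seifert_beta r) 0 p (-1)
        \<and> coeff_block (seifert_alpha r) (seifert_beta r) p (p + m) 1"
    using assms(7) coeff_blocks_ab[OF assms(3-6)] coeff_blocks_ba[OF assms(3-6)] by blast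
  then have "p \<le> card {y \<in> {0<..}.
        fst (cont_pair (seifert_alpha r) (seifert_beta r) y (1, 0) (m + p)) = 0}
      \<and> m \<le> card {y \<in> {-4<..<0}.
        fst (cont_pair (seifert_alpha r) (seifert_beta r) y (1, 0) (m + p)) = 0}"
    using assms(1,2) by (intro cont_pair_root_counts) auto
  ultimately show ?thesis
    by (intro alexander_poly_roots) auto
qed

end
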